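(* The language classes $\mathbf{CF}$ and $\mathbf{GRLOWJ}$ are incomparable, i.e., $\mathbf{CF}\not\subseteq\mathbf{GRLOWJ}$ and $\mathbf{GRLOWJ}\not\subseteq\mathbf{CF}$.
   Context: $\mathbf{CF}$ is the class of context-free languages. "Subword" means a contiguous factor. A GRLOWJFA is a tuple $\mathcal{A}=(\Sigma,Q,q_0,F,R)$ with $\Sigma$ a finite alphabet, $Q$ a finite state set, $q_0\in Q$, $F\subseteq Q$, and $R\subset Q\times\Sigma^+\times Q$ a finite set of rules such that for each $p\in Q$, $w\in\Sigma^+$ at most one $q$ has $(p,w,q)\in R$ (meaning: go from $p$ to $q$ deleting $w$). $\Sigma_p=\{w:(p,w,q)\in R\text{ for some }q\}$. Configurations lie in $\Sigma^*Q\Sigma^*$. Moves $\curvearrowright$: (1) for $t,u,v\in\Sigma^*$ and $(p,x,q)\in R$: $tpuxv\curvearrowright tuqv$ provided $u$ contains no word of $\Sigma_p$ as a subword and there are no $u_1,x_2\in\Sigma^*$, $u_2,x_1\in\Sigma^+$ with $u=u_1u_2$, $x=x_1x_2$, $u_2x_1=x$; (2) for $x\in\Sigma^+$, $y\in\Sigma^*$ with $y$ containing no word of $\Sigma_p$ as a subword: $xpy\curvearrowright pxy$. $L_{GRL}(\mathcal{A})=\{w\in\Sigma^*: q_0w\curvearrowright^* q_f \text{ for some } q_f\in F\}$. $\mathbf{GRLOWJ}$ is the class of languages so accepted. *)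

theory Defs
  imports Main
begin

(* Letters, states and nonterminals are drawn from nat; every finite alphabet
   embeds into nat, so language classes are sets of languages over finite
   subsets of nat. *)

definition subword :: "'a list \<Rightarrow> 'a list \<Rightarrow> bool" where
  "subword y u \<longleftrightarrow> (\<exists>a b. u = a @ y @ b)"

record cfg =
  nonterms :: "nat set"
  terms    :: "nat set"
  prods    :: "(nat \<times> (nat + nat) list) set"
  start    :: nat

definition wf_cfg :: "cfg \<Rightarrow> bool" where
  "wf_cfg G \<longleftrightarrow> finite (nonterms G) \<and> finite (terms G) \<and> finite (prods G)
     \<and> start G \<in> nonterms G
     \<and> (\<forall>(A, \<alpha>) \<in> prods G. A \<in> nonterms G \<and>
           set \<alpha> \<subseteq> Inl ` nonterms G \<union> Inr ` terms G)"

definition cfg_step :: "cfg \<Rightarrow> ((nat + nat) list \<times> (nat + nat) list) set" where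
  "cfg_step G = {(u @ [Inl A] @ v, u @ \<alpha> @ v) | u v A \<alpha>. (A, \<alpha>) \<in> prods G}"

definition cfg_lang :: "cfg \<Rightarrow> nat list set" where
  "cfg_lang G = {w. w \<in> lists (terms G) \<and> ([Inl (start G)], map Inr w) \<in> (cfg_step G)\<^sup>*}"

definition CF :: "nat list set set" where
  "CF = {L. \<exists>G. wf_cfg G \<and> L = cfg_lang G}"

record grlowjfa =
  alph  :: "nat set"
  states :: "nat set"
  init  :: nat
  finals :: "nat set"
  rules :: "(nat \<times> nat list \<times> nat) set"

definition wf_grlowjfa :: "grlowjfa \<Rightarrow> bool" where
  "wf_grlowjfa A \<longleftrightarrow> finite (alph A) \<and> finite (states A) \<and> init A \<in> states A
     \<and> finals A \<subseteq> states A \<and> finite (rules A)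
     \<and> (\<forall>(p, w, q) \<in> rules A. p \<in> states A \<and> q \<in> states A \<and> w \<noteq> [] \<and> w \<in> lists (alph A))
     \<and> (\<forall>p w q q'. (p, w, q) \<in> rules A \<longrightarrow> (p, w, q') \<in> rules A \<longrightarrow> q = q')"

definition rule_words :: "grlowjfa \<Rightarrow> nat \<Rightarrow> nat list set" where
  "rule_words A p = {w. \<exists>q. (p, w, q) \<in> rules A}"

type_synonym config = "nat list \<times> nat \<times> nat list"

definition no_rule_subword :: "grlowjfa \<Rightarrow> nat \<Rightarrow> nat list \<Rightarrow> bool" where
  "no_rule_subword A p u \<longleftrightarrow> (\<forall>w \<in> rule_words A p. \<not> subword w u)"

definition grl_move :: "grlowjfa \<Rightarrow> (config \<times> config) set" where
  "grl_move A =
     {((t, p, u @ x @ v), (t @ u, q, v)) | t u v x p q.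
        (p, x, q) \<in> rules A \<and> no_rule_subword A p u \<and>
        \<not> (\<exists>u1 u2 x1 x2. u2 \<noteq> [] \<and> x1 \<noteq> [] \<and> u = u1 @ u2 \<and> x = x1 @ x2 \<and> u2 @ x1 = x)}
   \<union> {((x, p, y), ([], p, x @ y)) | x y p. x \<noteq> [] \<and> no_rule_subword A p y}"

definition grl_lang :: "grlowjfa \<Rightarrow> nat list set" where
  "grl_lang A = {w. w \<in> lists (alph A) \<and>
      (\<exists>qf \<in> finals A. (([], init A, w), ([], qf, [])) \<in> (grl_move A)\<^sup>*)}"

definition GRLOWJ :: "nat list set set" where
  "GRLOWJ = {L. \<exists>A. wf_grlowjfa A \<and> L = grl_lang A}"

end

theory Submission
  imports Defs
begin

text \<open>
  The language \<open>{0\<^sup>n 1\<^sup>n 2\<^sup>n}\<close> is accepted by the automaton that deletes, in turn,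
  the first 0, the first 1 and the first 2 and then jumps back to the start; every move keeps
  the three letter counts balanced, so its language is not context-free by the pumping lemma.

  Conversely, let an automaton accept \<open>0\<^sup>n 1 0\<^sup>n\<close> for large n. While many zeros
  precede the 1, it can only delete prefixes of zeros, until some rule deletes a factor
  containing the 1; after that it deletes prefixes of zeros to the right of the head and jumps,
  and the configuration after the jump depends only on the total number of surviving zeros.
  So either a long stretch of zero deletions can be pumped along a cycle of states, or a
  surviving zero can be moved from behind the 1 to before it; in both cases some
  \<open>0\<^sup>i 1 0\<^sup>j\<close> with \<open>i \<noteq> j\<close> is accepted, although the context-free language
  \<open>{0\<^sup>n 1 0\<^sup>n}\<close> does not contain it.
\<close>

section \<open>Parse trees and the pumping lemma\<close>

datatype tree = Lf nat | Nd nat "tree list"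

fun root :: "tree \<Rightarrow> nat + nat" where
  "root (Lf a) = Inr a"
| "root (Nd A ts) = Inl A"

fun yield :: "tree \<Rightarrow> nat list" where
  "yield (Lf a) = [a]"
| "yield (Nd A ts) = concat (map yield ts)"

fun valid_tree :: "cfg \<Rightarrow> tree \<Rightarrow> bool" where
  "valid_tree G (Lf a) \<longleftrightarrow> a \<in> terms G"
| "valid_tree G (Nd A ts) \<longleftrightarrow> (A, map root ts) \<in> prods G \<and> (\<forall>t \<in> set ts. valid_tree G t)"

fun nonterms_of :: "tree \<Rightarrow> nat set" where
  "nonterms_of (Lf a) = {}"
| "nonterms_of (Nd A ts) = insert A (\<Union>t \<in> set ts. nonterms_of t)"

inductive occurs :: "tree \<Rightarrow> tree \<Rightarrow> nat list \<Rightarrow> nat list \<Rightarrow> bool" where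
  occurs_refl: "occurs t t [] []"
| occurs_child: "occurs c s u z \<Longrightarrow>
    occurs (Nd A (ts1 @ c # ts2)) s (concat (map yield ts1) @ u) (z @ concat (map yield ts2))"

lemma occurs_yield: "occurs t s u z \<Longrightarrow> yield t = u @ yield s @ z"
  by (induction rule: occurs.induct) auto

lemma occurs_valid_tree: "occurs t s u z \<Longrightarrow> valid_tree G t \<Longrightarrow> valid_tree G s"
  by (induction rule: occurs.induct) auto

lemma occurs_size: "occurs t s u z \<Longrightarrow> size s \<le> size t"
  by (induction rule: occurs.induct) auto

lemma occurs_trans: "occurs t s u z \<Longrightarrow> occurs s r u' z' \<Longrightarrow> occurs t r (u @ u') (z' @ z)"
proof (induction rule: occurs.induct)
  case (occurs_child c s u z A ts1 ts2)
  from occurs.occurs_child[OF occurs_child.IH[OF occurs_child.prems], of A ts1 ts2]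
  show ?case by simp
qed simp

lemma occurs_in_child:
  assumes "c \<in> set ts" "occurs c s u z"
  shows "\<exists>u' z'. occurs (Nd A ts) s u' z'"
proof -
  obtain ts1 ts2 where "ts = ts1 @ c # ts2" using split_list[OF assms(1)] by blast
  then show ?thesis using occurs_child[OF assms(2)] by blast
qed

lemma occurs_replace:
  "occurs t s u z \<Longrightarrow> valid_tree G t \<Longrightarrow> valid_tree G s' \<Longrightarrow> root s' = root s \<Longrightarrow>
   \<exists>t'. valid_tree G t' \<and> root t' = root t \<and> yield t' = u @ yield s' @ z \<and>
        size t' + size s = size t + size s'"
proof (induction rule: occurs.induct)
  case (occurs_child c s u z A ts1 ts2)
  then obtain c' where "valid_tree G c'" "root c' = root c" "yield c' = u @ yield s' @ z"
      "size c' + size s = size c + size s'"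
    by auto
  then show ?case
    using occurs_child.prems by (intro exI[of _ "Nd A (ts1 @ c' # ts2)"]) auto
qed auto

lemma nonterms_of_occurs: "A \<in> nonterms_of t \<Longrightarrow> \<exists>s u z. occurs t s u z \<and> root s = Inl A"
proof (induction t)
  case (Nd B ts)
  show ?case
  proof (cases "A = B")
    case True
    then show ?thesis using occurs_refl by fastforce
  next
    case False
    then obtain c where c: "c \<in> set ts" "A \<in> nonterms_of c" using Nd.prems by auto
    then obtain s u z where "occurs c s u z" "root s = Inl A" using Nd.IH by blast
    then show ?thesis using occurs_in_child[OF c(1)] by blast
  qed
qed simp

definition repeats_nonterm :: "tree \<Rightarrow> bool" where
  "repeats_nonterm t \<longleftrightarrow> (\<exists>B t1 u z t2 v y. occurs t t1 u z \<and> root t1 = Inl B \<and>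
     occurs t1 t2 v y \<and> root t2 = Inl B \<and> size t2 < size t1)"

lemma repeats_nonterm_child:
  "c \<in> set ts \<Longrightarrow> repeats_nonterm c \<Longrightarrow> repeats_nonterm (Nd A ts)"
  unfolding repeats_nonterm_def by (meson occurs_in_child)

lemma root_repeats_nonterm: "A \<in> nonterms_of c \<Longrightarrow> c \<in> set ts \<Longrightarrow> repeats_nonterm (Nd A ts)"
proof -
  assume "A \<in> nonterms_of c" "c \<in> set ts"
  moreover from this obtain s u z where s: "occurs c s u z" "root s = Inl A"
    using nonterms_of_occurs by blast
  moreover have "size c < size (Nd A ts)"
    using \<open>c \<in> set ts\<close> by (induction ts) auto
  ultimately show ?thesis
    unfolding repeats_nonterm_def using occurs_size[OF s(1)]
    by (metis occurs_in_child occurs_refl order_le_less_trans root.simps(2))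
qed

lemma length_yield_le_if_not_repeats_nonterm:
  assumes m: "\<forall>(A, \<alpha>) \<in> prods G. length \<alpha> \<le> m" "1 \<le> m"
  shows "valid_tree G t \<Longrightarrow> finite X \<Longrightarrow> nonterms_of t \<subseteq> X \<Longrightarrow> \<not> repeats_nonterm t \<Longrightarrow>
    length (yield t) \<le> m ^ card X"
proof (induction t arbitrary: X)
  case (Lf a)
  then show ?case using m(2) by simp
next
  case (Nd A ts)
  have A: "A \<in> X" using Nd.prems(3) by simp
  have "length (yield c) \<le> m ^ card (X - {A})" if c: "c \<in> set ts" for c
  proof (rule Nd.IH[OF c])
    show "valid_tree G c" "finite (X - {A})" using Nd.prems c by auto
    show "\<not> repeats_nonterm c" using Nd.prems(4) repeats_nonterm_child[OF c] by blast
    show "nonterms_of c \<subseteq> X - {A}"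
      using Nd.prems(3,4) root_repeats_nonterm[OF _ c] c by auto
  qed
  then have "length (yield (Nd A ts)) \<le> length ts * m ^ card (X - {A})"
    using sum_list_mono[of ts "\<lambda>c. length (yield c)" "\<lambda>_. m ^ card (X - {A})"]
    by (simp add: length_concat sum_list_triv comp_def)
  also have "length ts \<le> m"
    using Nd.prems(1) m(1) by (fastforce dest: bspec[of _ _ "(A, map root ts)"])
  then have "length ts * m ^ card (X - {A}) \<le> m * m ^ card (X - {A})" by simp
  also have "\<dots> = m ^ card X"
    using A Nd.prems(2) by (metis card_Suc_Diff1 power_Suc)
  finally show ?case .
qed

lemma occurs_long_node_with_short_children:
  "1 \<le> P \<Longrightarrow> P < length (yield t) \<Longrightarrow>
   \<exists>A ts u z. occurs t (Nd A ts) u z \<and> P < length (yield (Nd A ts)) \<and>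
     (\<forall>c \<in> set ts. length (yield c) \<le> P)"
proof (induction t)
  case (Nd A ts)
  show ?case
  proof (cases "\<exists>c \<in> set ts. P < length (yield c)")
    case True
    then obtain c where c: "c \<in> set ts" "P < length (yield c)" by blast
    then show ?thesis using Nd occurs_in_child[OF c(1)] by blast
  next
    case False
    then show ?thesis using Nd.prems occurs_refl by fastforce
  qed
qed simp

lemma valid_tree_nonterms_of: "wf_cfg G \<Longrightarrow> valid_tree G t \<Longrightarrow> nonterms_of t \<subseteq> nonterms G"
  by (induction t) (auto simp: wf_cfg_def)

lemma valid_tree_pumping:
  assumes G: "wf_cfg G" and m: "\<forall>(A, \<alpha>) \<in> prods G. length \<alpha> \<le> m" "1 \<le> m"
    and t: "valid_tree G t" and long: "m ^ card (nonterms G) < length (yield t)"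
  shows "\<exists>u v x y z t'. yield t = u @ v @ x @ y @ z \<and>
    length (v @ x @ y) \<le> m * m ^ card (nonterms G) \<and>
    valid_tree G t' \<and> root t' = root t \<and> yield t' = u @ x @ z \<and> size t' < size t"
proof -
  define P where "P = m ^ card (nonterms G)"
  obtain A ts u0 z0 where s: "occurs t (Nd A ts) u0 z0" "P < length (yield (Nd A ts))"
      "\<forall>c \<in> set ts. length (yield c) \<le> P"
    using occurs_long_node_with_short_children[of P t] m(2) long by (auto simp: P_def)
  have vs: "valid_tree G (Nd A ts)" using occurs_valid_tree[OF s(1) t] .
  have "length (yield (Nd A ts)) \<le> length ts * P"
    using sum_list_mono[of ts "\<lambda>c. length (yield c)" "\<lambda>_. P"] s(3)
    by (simp add: length_concat sum_list_triv comp_def)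
  also have "length ts \<le> m"
    using vs m(1) by (fastforce dest: bspec[of _ _ "(A, map root ts)"])
  then have "length ts * P \<le> m * P" by simp
  finally have short: "length (yield (Nd A ts)) \<le> m * P" .
  have "repeats_nonterm (Nd A ts)"
    using length_yield_le_if_not_repeats_nonterm[OF m vs _ valid_tree_nonterms_of[OF G vs]] G s(2)
    by (force simp: P_def wf_cfg_def)
  then obtain B t1 u1 z1 t2 v y where r: "occurs (Nd A ts) t1 u1 z1" "root t1 = Inl B"
      "occurs t1 t2 v y" "root t2 = Inl B" "size t2 < size t1"
    unfolding repeats_nonterm_def by blast
  have ot: "occurs t t1 (u0 @ u1) (z1 @ z0)" using occurs_trans[OF s(1) r(1)] .
  have "valid_tree G t2" using occurs_valid_tree[OF r(3) occurs_valid_tree[OF ot t]] .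
  then obtain t' where t': "valid_tree G t'" "root t' = root t"
      "yield t' = (u0 @ u1) @ yield t2 @ (z1 @ z0)" "size t' + size t1 = size t + size t2"
    using occurs_replace[OF ot t] r by auto
  have "yield t = (u0 @ u1) @ v @ yield t2 @ y @ (z1 @ z0)"
    using occurs_yield[OF ot] occurs_yield[OF r(3)] by simp
  moreover have "length (v @ yield t2 @ y) \<le> m * P"
    using occurs_yield[OF r(1)] occurs_yield[OF r(3)] short by simp
  ultimately show ?thesis
    using t' r(5) unfolding P_def by (intro exI[of _ "u0 @ u1"] exI[of _ v] exI[of _ "yield t2"]
        exI[of _ y] exI[of _ "z1 @ z0"] exI[of _ t']) auto
qed

lemma cfg_step_append:
  "(x, y) \<in> cfg_step G \<Longrightarrow> (u @ x @ v, u @ y @ v) \<in> cfg_step G"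
proof -
  assume "(x, y) \<in> cfg_step G"
  then obtain u' v' A \<alpha> where "x = u' @ [Inl A] @ v'" "y = u' @ \<alpha> @ v'" "(A, \<alpha>) \<in> prods G"
    unfolding cfg_step_def by blast
  then have "(u @ x @ v, u @ y @ v) =
      ((u @ u') @ [Inl A] @ (v' @ v), (u @ u') @ \<alpha> @ (v' @ v)) \<and> (A, \<alpha>) \<in> prods G"
    by simp
  then show ?thesis unfolding cfg_step_def by blast
qed

lemma cfg_steps_append:
  "(x, y) \<in> (cfg_step G)\<^sup>* \<Longrightarrow> (u @ x @ v, u @ y @ v) \<in> (cfg_step G)\<^sup>*"
  by (induction rule: rtrancl_induct) (auto dest: cfg_step_append[of _ _ G u v])

lemma cfg_steps_concat:
  "\<forall>t \<in> set ts. ([root t], map Inr (yield t)) \<in> (cfg_step G)\<^sup>* \<Longrightarrow>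
   (map root ts, map Inr (concat (map yield ts))) \<in> (cfg_step G)\<^sup>*"
proof (induction ts)
  case (Cons t ts)
  have "([root t] @ map root ts, map Inr (yield t) @ map root ts) \<in> (cfg_step G)\<^sup>*"
    using cfg_steps_append[of "[root t]" _ G "[]"] Cons.prems by simp
  moreover have "(map Inr (yield t) @ map root ts,
      map Inr (yield t) @ map Inr (concat (map yield ts))) \<in> (cfg_step G)\<^sup>*"
    using cfg_steps_append[of "map root ts" _ G _ "[]"] Cons by simp
  ultimately show ?case by (simp add: rtrancl_trans)
qed simp

lemma valid_tree_derives: "valid_tree G t \<Longrightarrow> ([root t], map Inr (yield t)) \<in> (cfg_step G)\<^sup>*"
proof (induction t)
  case (Nd A ts)
  have "([] @ [Inl A] @ [], [] @ map root ts @ []) \<in> cfg_step G"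
    unfolding cfg_step_def using Nd.prems by fastforce
  moreover have "(map root ts, map Inr (concat (map yield ts))) \<in> (cfg_step G)\<^sup>*"
    using Nd by (intro cfg_steps_concat) auto
  ultimately show ?case by (simp add: converse_rtrancl_into_rtrancl)
qed simp

lemma valid_tree_in_cfg_lang:
  "valid_tree G t \<Longrightarrow> root t = Inl (start G) \<Longrightarrow> yield t \<in> cfg_lang G"
proof -
  assume t: "valid_tree G t" "root t = Inl (start G)"
  have "set (yield t) \<subseteq> terms G" using t(1) by (induction t) auto
  then show ?thesis unfolding cfg_lang_def using valid_tree_derives[OF t(1)] t(2) by auto
qed

lemma cfg_steps_to_trees:
  "(\<alpha>, map root ts) \<in> (cfg_step G)\<^sup>* \<Longrightarrow> \<forall>t \<in> set ts. valid_tree G t \<Longrightarrow>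
   \<exists>ts'. map root ts' = \<alpha> \<and> (\<forall>t \<in> set ts'. valid_tree G t) \<and>
     concat (map yield ts') = concat (map yield ts)"
proof (induction rule: converse_rtrancl_induct)
  case (step \<beta> \<gamma>)
  then obtain ts' where ts': "map root ts' = \<gamma>" "\<forall>t \<in> set ts'. valid_tree G t"
      "concat (map yield ts') = concat (map yield ts)"
    by blast
  from step.hyps(1) obtain u v A \<delta> where uv: "\<beta> = u @ [Inl A] @ v" "\<gamma> = u @ \<delta> @ v"
      "(A, \<delta>) \<in> prods G"
    unfolding cfg_step_def by blast
  from ts'(1) uv(2) obtain ts1 ts23 where ts1: "ts' = ts1 @ ts23" "map root ts1 = u"
      "map root ts23 = \<delta> @ v"
    by (metis map_eq_append_conv)
  from ts1(3) obtain ts2 ts3 where "ts23 = ts2 @ ts3" "map root ts2 = \<delta>" "map root ts3 = v"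
    by (metis map_eq_append_conv)
  then show ?case
    using ts' ts1 uv by (intro exI[of _ "ts1 @ [Nd A ts2] @ ts3"]) auto
qed blast

lemma cfg_lang_valid_tree:
  assumes "w \<in> cfg_lang G"
  obtains t where "valid_tree G t" "root t = Inl (start G)" "yield t = w"
proof -
  have d: "([Inl (start G)], map root (map Lf w)) \<in> (cfg_step G)\<^sup>*"
    and v: "\<forall>t \<in> set (map Lf w). valid_tree G t"
    using assms unfolding cfg_lang_def by (auto simp: comp_def)
  from cfg_steps_to_trees[OF d v] obtain ts' where
    "map root ts' = [Inl (start G)]" "\<forall>t \<in> set ts'. valid_tree G t"
    "concat (map yield ts') = concat (map yield (map Lf w))"
    by (elim exE conjE)
  moreover have "concat (map yield (map Lf w)) = w" by (induction w) auto
  ultimately show thesis using that by (cases ts') auto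
qed

lemma cfg_pumping_down:
  assumes G: "wf_cfg G"
  obtains p where "\<And>w. w \<in> cfg_lang G \<Longrightarrow> p < length w \<Longrightarrow>
    \<exists>u v x y z. w = u @ v @ x @ y @ z \<and> v @ y \<noteq> [] \<and> length (v @ x @ y) \<le> p \<and>
      u @ x @ z \<in> cfg_lang G"
proof
  define m where "m = Max (insert 1 ((\<lambda>(A, \<alpha>). length \<alpha>) ` prods G))"
  have "finite (prods G)" using G by (simp add: wf_cfg_def)
  then have m: "\<forall>(A, \<alpha>) \<in> prods G. length \<alpha> \<le> m" "1 \<le> m"
    unfolding m_def by (auto intro: Max_ge)
  fix w assume w: "w \<in> cfg_lang G" "m * m ^ card (nonterms G) < length w"
  let ?parse = "\<lambda>t. valid_tree G t \<and> root t = Inl (start G) \<and> yield t = w"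
  obtain t0 where "?parse t0" using cfg_lang_valid_tree[OF w(1)] by blast
  then obtain t where t: "valid_tree G t" "root t = Inl (start G)" "yield t = w"
    and min: "\<And>t'. ?parse t' \<Longrightarrow> size t \<le> size t'"
    using ex_has_least_nat[of ?parse t0 size] by blast
  have "m ^ card (nonterms G) \<le> m * m ^ card (nonterms G)" using m(2) by simp
  then have "m ^ card (nonterms G) < length (yield t)" using w(2) unfolding t(3) by linarith
  from valid_tree_pumping[OF G m t(1) this] obtain u v x y z t' where p: "w = u @ v @ x @ y @ z"
      "length (v @ x @ y) \<le> m * m ^ card (nonterms G)"
      "valid_tree G t'" "root t' = root t" "yield t' = u @ x @ z" "size t' < size t"
    unfolding t(3) by blast
  \<comment> \<open>Pumping out an empty v y would give a smaller parse tree of w.\<close>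
  have "v @ y \<noteq> []" using min[of t'] p t by auto
  moreover have "u @ x @ z \<in> cfg_lang G" using valid_tree_in_cfg_lang[OF p(3)] p t by simp
  ultimately show "\<exists>u v x y z. w = u @ v @ x @ y @ z \<and> v @ y \<noteq> [] \<and>
      length (v @ x @ y) \<le> m * m ^ card (nonterms G) \<and> u @ x @ z \<in> cfg_lang G"
    using p by blast
qed

section \<open>Moves of the automata\<close>

definition overlaps :: "'a list \<Rightarrow> 'a list \<Rightarrow> bool" where
  "overlaps u x \<longleftrightarrow> (\<exists>u1 u2 x1 x2. u2 \<noteq> [] \<and> x1 \<noteq> [] \<and> u = u1 @ u2 \<and> x = x1 @ x2 \<and> u2 @ x1 = x)"

lemma not_overlaps_singleton: "\<not> overlaps u [a]"
  unfolding overlaps_def by (auto simp: append_eq_Cons_conv)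

lemma grl_move_deleteI:
  "(p, x, q) \<in> rules A \<Longrightarrow> no_rule_subword A p u \<Longrightarrow> \<not> overlaps u x \<Longrightarrow>
   ((t, p, u @ x @ v), (t @ u, q, v)) \<in> grl_move A"
  unfolding grl_move_def overlaps_def by blast

lemma grl_move_jumpI:
  "t \<noteq> [] \<Longrightarrow> no_rule_subword A p y \<Longrightarrow> ((t, p, y), ([], p, t @ y)) \<in> grl_move A"
  unfolding grl_move_def by blast

lemma grl_moveE:
  assumes "(c, c') \<in> grl_move A"
  obtains (delete) t p u x v q where "c = (t, p, u @ x @ v)" "c' = (t @ u, q, v)"
      "(p, x, q) \<in> rules A" "no_rule_subword A p u" "\<not> overlaps u x"
    | (jump) t p y where "c = (t, p, y)" "c' = ([], p, t @ y)" "t \<noteq> []" "no_rule_subword A p y"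
  using assms unfolding grl_move_def overlaps_def by (elim UnE CollectE exE conjE) blast+

lemma rule_word_ne_Nil: "wf_grlowjfa A \<Longrightarrow> (p, w, q) \<in> rules A \<Longrightarrow> w \<noteq> []"
  unfolding wf_grlowjfa_def by fast

lemma no_rule_subword_Nil: "wf_grlowjfa A \<Longrightarrow> no_rule_subword A p []"
  unfolding no_rule_subword_def rule_words_def subword_def by (auto dest: rule_word_ne_Nil)

lemma no_rule_subword_letter:
  "rule_words A p = {[a]} \<Longrightarrow> a \<notin> set u \<Longrightarrow> no_rule_subword A p u"
  unfolding no_rule_subword_def subword_def by fastforce

lemma grl_move_delete_prefix:
  "wf_grlowjfa A \<Longrightarrow> (p, x, q) \<in> rules A \<Longrightarrow> ((t, p, x @ v), (t, q, v)) \<in> grl_move A"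
  using grl_move_deleteI[of p x q A "[]" t v] no_rule_subword_Nil[of A p]
  by (simp add: overlaps_def)

definition accepts :: "grlowjfa \<Rightarrow> config \<Rightarrow> bool" where
  "accepts A c \<longleftrightarrow> (\<exists>qf \<in> finals A. (c, ([], qf, [])) \<in> (grl_move A)\<^sup>*)"

lemma grl_lang_accepts: "grl_lang A = {w \<in> lists (alph A). accepts A ([], init A, w)}"
  unfolding grl_lang_def accepts_def by blast

lemma accepts_moves: "(c, c') \<in> (grl_move A)\<^sup>* \<Longrightarrow> accepts A c' \<Longrightarrow> accepts A c"
  unfolding accepts_def by (meson rtrancl_trans)

lemma accepts_move: "(c, c') \<in> grl_move A \<Longrightarrow> accepts A c' \<Longrightarrow> accepts A c"
  using accepts_moves by blast

lemma accepts_next: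
  assumes "accepts A (t, p, s)" "t @ s \<noteq> []"
  obtains c' where "((t, p, s), c') \<in> grl_move A" "accepts A c'"
proof -
  obtain qf where "qf \<in> finals A" "((t, p, s), ([], qf, [])) \<in> (grl_move A)\<^sup>*"
    using assms(1) unfolding accepts_def by blast
  moreover have "(t, p, s) \<noteq> ([], qf, [])" using assms(2) by auto
  ultimately show thesis
    using that unfolding accepts_def by (blast elim: converse_rtranclE)
qed

section \<open>A non-context-free language in GRLOWJ\<close>

definition abc_automaton :: grlowjfa where
  "abc_automaton = \<lparr>alph = {0, 1, 2}, states = {0, 1, 2}, init = 0, finals = {0},
     rules = {(0, [0], 1), (1, [1], 2), (2, [2], 0)}\<rparr>"

definition abc_word :: "nat \<Rightarrow> nat list" where
  "abc_word n = replicate n 0 @ replicate n 1 @ replicate n 2"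

lemma wf_abc_automaton: "wf_grlowjfa abc_automaton"
  unfolding wf_grlowjfa_def abc_automaton_def by auto

lemma abc_automaton_rule_words: "p \<in> {0, 1, 2} \<Longrightarrow> rule_words abc_automaton p = {[p]}"
  unfolding rule_words_def abc_automaton_def by auto

lemma abc_automaton_delete:
  assumes "(p, [p], q) \<in> rules abc_automaton" "p \<notin> set u"
  shows "((t, p, u @ [p] @ v), (t @ u, q, v)) \<in> grl_move abc_automaton"
proof (rule grl_move_deleteI[OF assms(1) _ not_overlaps_singleton])
  have "p \<in> {0, 1, 2}" using assms(1) by (auto simp: abc_automaton_def)
  from no_rule_subword_letter[OF abc_automaton_rule_words[OF this] assms(2)]
  show "no_rule_subword abc_automaton p u" .
qed

lemma abc_automaton_round:
  "(([], 0, abc_word (Suc k)), ([], 0, abc_word k)) \<in> (grl_move abc_automaton)\<^sup>*"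
proof -
  let ?a = "replicate k (0::nat)" and ?b = "replicate k (1::nat)" and ?c = "replicate k (2::nat)"
  have r: "(0, [0], 1) \<in> rules abc_automaton" "(1, [1], 2) \<in> rules abc_automaton"
      "(2, [2], 0) \<in> rules abc_automaton"
    by (simp_all add: abc_automaton_def)
  have "abc_word (Suc k) = [] @ [0] @ (?a @ 1 # ?b @ 2 # ?c)"
    by (simp add: abc_word_def replicate_app_Cons_same)
  then have "(([], 0, abc_word (Suc k)), ([], 1, ?a @ [1] @ (?b @ 2 # ?c))) \<in> grl_move abc_automaton"
    using abc_automaton_delete[OF r(1), of "[]"] by simp
  also have "(([], 1, ?a @ [1] @ (?b @ 2 # ?c)), (?a, 2, ?b @ [2] @ ?c)) \<in> grl_move abc_automaton"
    using abc_automaton_delete[OF r(2), of ?a "[]"] by simp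
  also have "((?a, 2, ?b @ [2] @ ?c), (?a @ ?b, 0, ?c)) \<in> grl_move abc_automaton"
    using abc_automaton_delete[OF r(3), of ?b] by simp
  also have "((?a @ ?b, 0, ?c), ([], 0, abc_word k)) \<in> (grl_move abc_automaton)\<^sup>*"
  proof (cases k)
    case (Suc j)
    have "no_rule_subword abc_automaton 0 ?c"
      using no_rule_subword_letter[OF abc_automaton_rule_words[of 0]] by simp
    then show ?thesis using grl_move_jumpI[of "?a @ ?b"] Suc by (auto simp: abc_word_def)
  qed (simp add: abc_word_def)
  finally show ?thesis by (rule trancl_into_rtrancl)
qed

lemma abc_word_in_grl_lang: "abc_word n \<in> grl_lang abc_automaton"
proof -
  have "(([], 0, abc_word n), ([], 0, [])) \<in> (grl_move abc_automaton)\<^sup>*"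
  proof (induction n)
    case (Suc k)
    then show ?case using abc_automaton_round[of k] by (meson rtrancl_trans)
  qed (simp add: abc_word_def)
  then show ?thesis
    unfolding grl_lang_def by (auto simp: abc_automaton_def abc_word_def)
qed

definition abc_invariant :: "config \<Rightarrow> bool" where
  "abc_invariant c = (case c of (t, p, s) \<Rightarrow>
     let n = count_list (t @ s) in
       (p = 0 \<and> n 0 = n 1 \<and> n 1 = n 2) \<or>
       (p = 1 \<and> n 0 + 1 = n 1 \<and> n 1 = n 2) \<or>
       (p = 2 \<and> n 0 + 1 = n 2 \<and> n 1 + 1 = n 2))"

lemma abc_invariant_backwards:
  "(c, ([], 0, [])) \<in> (grl_move abc_automaton)\<^sup>* \<Longrightarrow> abc_invariant c"
proof (induction rule: converse_rtrancl_induct)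
  case (step c c')
  from step.hyps(1) show ?case
  proof (cases rule: grl_moveE)
    case (delete t p u x v q)
    then have "(p = 0 \<and> x = [0] \<and> q = 1) \<or> (p = 1 \<and> x = [1] \<and> q = 2) \<or> (p = 2 \<and> x = [2] \<and> q = 0)"
      by (auto simp: abc_automaton_def)
    then show ?thesis using step.IH delete(1,2) by (auto simp: abc_invariant_def Let_def)
  next
    case (jump t p y)
    then show ?thesis using step.IH by (auto simp: abc_invariant_def Let_def)
  qed
qed (simp add: abc_invariant_def)

lemma grl_lang_abc_automaton_counts:
  "w \<in> grl_lang abc_automaton \<Longrightarrow> count_list w 0 = count_list w 1 \<and> count_list w 1 = count_list w 2"
proof -
  assume "w \<in> grl_lang abc_automaton"
  then have "(([], 0, w), ([], 0, [])) \<in> (grl_move abc_automaton)\<^sup>*"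
    unfolding grl_lang_def by (auto simp: abc_automaton_def)
  then show ?thesis using abc_invariant_backwards by (force simp: abc_invariant_def)
qed

lemma count_list_replicate: "count_list (replicate n a) b = (if a = b then n else 0)"
  by (induction n) auto

lemma abc_word_nth: "k < 3 * n \<Longrightarrow> abc_word n ! k = (if k < n then 0 else if k < 2 * n then 1 else 2)"
  by (auto simp: abc_word_def nth_append)

lemma abc_word_short_factor:
  assumes w: "abc_word n = u @ f @ z" and f: "length f < n"
  shows "0 \<notin> set f \<or> 2 \<notin> set f"
proof (rule ccontr)
  assume "\<not> ?thesis"
  then obtain i j where ij: "i < length f" "f ! i = 0" "j < length f" "f ! j = 2"
    by (auto simp: in_set_conv_nth)
  have "length (abc_word n) = 3 * n" by (simp add: abc_word_def)
  then have "length u + i < 3 * n" "length u + j < 3 * n" using w ij by auto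
  moreover have "abc_word n ! (length u + i) = 0" "abc_word n ! (length u + j) = 2"
    using w ij by (simp_all add: nth_append)
  ultimately have "length u + i < n" "2 * n \<le> length u + j"
    using abc_word_nth by (auto split: if_splits)
  then show False using ij f by linarith
qed

lemma abc_word_pumped_down_unbalanced:
  assumes w: "abc_word n = u @ v @ x @ y @ z" and vy: "v @ y \<noteq> []"
    and short: "length (v @ x @ y) < n"
  shows "\<not> (count_list (u @ x @ z) 0 = count_list (u @ x @ z) 1 \<and>
            count_list (u @ x @ z) 1 = count_list (u @ x @ z) 2)"
proof
  assume eq: "count_list (u @ x @ z) 0 = count_list (u @ x @ z) 1 \<and>
      count_list (u @ x @ z) 1 = count_list (u @ x @ z) 2"
  have "count_list (u @ x @ z) a + count_list (v @ y) a = n" if "a \<in> {0, 1, 2}" for a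
  proof -
    have "count_list (u @ x @ z) a + count_list (v @ y) a = count_list (abc_word n) a"
      using w by simp
    also have "\<dots> = n" using that by (auto simp: abc_word_def count_list_replicate)
    finally show ?thesis .
  qed
  from this[of 0] this[of 1] this[of 2] have same: "count_list (v @ y) 0 = count_list (v @ y) 1"
      "count_list (v @ y) 1 = count_list (v @ y) 2"
    using eq by simp_all
  have "set (v @ y) \<subseteq> set (abc_word n)" using w by auto
  also have "\<dots> \<subseteq> {0, 1, 2}" by (auto simp: abc_word_def)
  finally have "sum (count_list (v @ y)) {0, 1, 2} = length (v @ y)"
    by (rule sum_count_set) simp
  then have "count_list (v @ y) 0 + count_list (v @ y) 1 + count_list (v @ y) 2 = length (v @ y)"
    by (simp del: count_list_append length_append add: add.assoc)
  moreover have "0 < length (v @ y)" using vy by blast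
  ultimately have "0 < count_list (v @ y) 0" using same by linarith
  moreover have "0 < count_list (v @ y) 2" using same calculation by linarith
  ultimately show False
    using abc_word_short_factor[of n u "v @ x @ y" z] w short by auto
qed

lemma grl_lang_abc_automaton_not_CF: "grl_lang abc_automaton \<notin> CF"
proof
  assume "grl_lang abc_automaton \<in> CF"
  then obtain G where G: "wf_cfg G" and L: "grl_lang abc_automaton = cfg_lang G"
    unfolding CF_def by blast
  obtain p where pump: "\<And>w. w \<in> cfg_lang G \<Longrightarrow> p < length w \<Longrightarrow>
      \<exists>u v x y z. w = u @ v @ x @ y @ z \<and> v @ y \<noteq> [] \<and> length (v @ x @ y) \<le> p \<and>
        u @ x @ z \<in> cfg_lang G"
    using cfg_pumping_down[OF G] by blast
  have "abc_word (p + 1) \<in> cfg_lang G" using abc_word_in_grl_lang L by blast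
  moreover have "p < length (abc_word (p + 1))" by (simp add: abc_word_def)
  ultimately obtain u v x y z where "abc_word (p + 1) = u @ v @ x @ y @ z" "v @ y \<noteq> []"
      "length (v @ x @ y) < p + 1" "u @ x @ z \<in> grl_lang abc_automaton"
    using pump L by (metis less_Suc_eq_le Suc_eq_plus1)
  then show False using grl_lang_abc_automaton_counts abc_word_pumped_down_unbalanced by blast
qed

section \<open>Accepting computations on \<open>0\<^sup>i 1 0\<^sup>j\<close>\<close>

abbreviation zeros :: "nat \<Rightarrow> nat list" where
  "zeros n \<equiv> replicate n 0"

definition marked :: "nat \<Rightarrow> nat \<Rightarrow> nat list" where
  "marked i j = zeros i @ 1 # zeros j"

definition max_rule_len :: "grlowjfa \<Rightarrow> nat" where
  "max_rule_len A = Max (insert 0 ((\<lambda>(p, w, q). length w) ` rules A))"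

lemma rule_length_le:
  assumes "wf_grlowjfa A" "(p, w, q) \<in> rules A"
  shows "length w \<le> max_rule_len A"
proof -
  have "finite (rules A)" using assms(1) by (simp add: wf_grlowjfa_def)
  then show ?thesis
    unfolding max_rule_len_def using assms(2) by (auto intro!: Max_ge rev_image_eqI[of "(p, w, q)"])
qed

lemma rule_source_state: "wf_grlowjfa A \<Longrightarrow> (p, w, q) \<in> rules A \<Longrightarrow> p \<in> states A"
  unfolding wf_grlowjfa_def by fast

lemma append_eq_replicate:
  "u @ v = replicate n a \<Longrightarrow> u = replicate (length u) a \<and> v = replicate (length v) a"
  by (metis Un_iff in_set_replicate replicate_length_same set_append)

lemma length_marked [simp]: "length (marked i m) = i + 1 + m"
  by (simp add: marked_def)

lemma zeros_append_marked: "zeros a @ marked b m = marked (a + b) m"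
  by (simp add: marked_def replicate_add)

lemma marked_eq_append:
  assumes "marked i m = u @ w"
  shows "(\<exists>j \<le> i. u = zeros j \<and> w = marked (i - j) m) \<or>
         (\<exists>l \<le> m. u = marked i l \<and> w = zeros (m - l))"
proof (cases "length u \<le> i")
  case True
  have "u = take (length u) (marked i m)" "w = drop (length u) (marked i m)"
    using assms by simp_all
  then have "u = zeros (length u) \<and> w = marked (i - length u) m"
    using True by (simp add: marked_def)
  then show ?thesis using True by blast
next
  case False
  define l where "l = length u - i - 1"
  have "l \<le> m" using arg_cong[OF assms, of length] l_def False by simp
  have "u = take (length u) (marked i m)" "w = drop (length u) (marked i m)"
    using assms by simp_all
  then have "u = marked i l \<and> w = zeros (m - l)"
    using False \<open>l \<le> m\<close> unfolding l_def by (simp add: marked_def take_Cons' drop_Cons')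
  then show ?thesis using \<open>l \<le> m\<close> by blast
qed

inductive zero_run :: "grlowjfa \<Rightarrow> nat set \<Rightarrow> nat \<Rightarrow> nat \<Rightarrow> nat \<Rightarrow> bool" for A where
  zero_run_Nil: "zero_run A X p 0 p"
| zero_run_Cons: "p \<in> X \<Longrightarrow> (p, zeros k, q) \<in> rules A \<Longrightarrow> zero_run A X q d r \<Longrightarrow>
    zero_run A X p (k + d) r"

lemma zero_run_trans: "zero_run A X p d1 q \<Longrightarrow> zero_run A X q d2 r \<Longrightarrow> zero_run A X p (d1 + d2) r"
  by (induction rule: zero_run.induct) (auto simp: add.assoc intro: zero_run.intros)

lemma zero_run_mono: "zero_run A X p d q \<Longrightarrow> X \<subseteq> Y \<Longrightarrow> zero_run A Y p d q"
  by (induction rule: zero_run.induct) (auto intro: zero_run.intros)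

lemma zero_run_avoid_or_visit:
  "zero_run A X q d r \<Longrightarrow>
   zero_run A (X - {p}) q d r \<or> (\<exists>d1 d2. zero_run A X q d1 p \<and> zero_run A X p d2 r \<and> d = d1 + d2)"
proof (induction rule: zero_run.induct)
  case (zero_run_Cons q1 X k q2 d r)
  show ?case
  proof (cases "q1 = p")
    case True
    then show ?thesis using zero_run_Cons.hyps
      by (intro disjI2 exI[of _ 0] exI[of _ "k + d"]) (auto intro: zero_run.intros)
  next
    case False
    from zero_run_Cons.IH show ?thesis
    proof
      assume "zero_run A (X - {p}) q2 d r"
      then show ?thesis using False zero_run_Cons.hyps by (auto intro: zero_run.intros)
    next
      assume "\<exists>d1 d2. zero_run A X q2 d1 p \<and> zero_run A X p d2 r \<and> d = d1 + d2"
      then obtain d1 d2 where "zero_run A X q2 d1 p" "zero_run A X p d2 r" "d = d1 + d2"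
        by blast
      then show ?thesis using zero_run_Cons.hyps
        by (intro disjI2 exI[of _ "k + d1"] exI[of _ d2]) (auto intro: zero_run.intros)
    qed
  qed
qed (auto intro: zero_run.intros)

lemma zero_run_first:
  "zero_run A X p d r \<Longrightarrow> 0 < d \<Longrightarrow>
   \<exists>k q d'. p \<in> X \<and> (p, zeros k, q) \<in> rules A \<and> zero_run A X q d' r \<and> d = k + d'"
  by (induction rule: zero_run.induct) auto

lemma zero_run_pump:
  assumes A: "wf_grlowjfa A"
  shows "finite X \<Longrightarrow> zero_run A X p d r \<Longrightarrow> max_rule_len A * card X < d \<Longrightarrow>
    \<exists>D > 0. zero_run A X p (d + D) r"
proof (induction "card X" arbitrary: X p d r)
  case 0
  then show ?case using zero_run_first[OF 0(3)] by auto
next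
  case (Suc n)
  obtain k q d' where d: "d = k + d'" "p \<in> X" "(p, zeros k, q) \<in> rules A" "zero_run A X q d' r"
    using zero_run_first[OF Suc.prems(2)] Suc.prems(3) by auto
  have k: "1 \<le> k" "k \<le> max_rule_len A"
    using rule_word_ne_Nil[OF A d(3)] rule_length_le[OF A d(3)] by auto
  from zero_run_avoid_or_visit[OF d(4), of p] show ?case
  proof
    assume avoid: "zero_run A (X - {p}) q d' r"
    have "card (X - {p}) = n" using Suc.hyps(2) d(2) Suc.prems(1) by simp
    moreover have "max_rule_len A * n < d'"
      using Suc.prems(3) Suc.hyps(2)[symmetric] d(1) k by simp
    ultimately obtain D where "D > 0" "zero_run A (X - {p}) q (d' + D) r"
      using Suc.hyps(1)[of "X - {p}" q d' r] avoid Suc.prems(1) by auto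
    then have "zero_run A X p (k + (d' + D)) r"
      using zero_run_Cons[OF d(2,3)] zero_run_mono by blast
    then show ?thesis using \<open>D > 0\<close> d(1) by (auto simp: add.assoc)
  next
    assume "\<exists>d1 d2. zero_run A X q d1 p \<and> zero_run A X p d2 r \<and> d' = d1 + d2"
    then obtain d1 where "zero_run A X q d1 p" by blast
    \<comment> \<open>The run passes through p twice; traversing the cycle once more deletes k + d1 more zeros.\<close>
    then have "zero_run A X p (k + d1) p" by (rule zero_run_Cons[OF d(2,3)])
    from zero_run_trans[OF this Suc.prems(2)] show ?thesis
      using k by (intro exI[of _ "k + d1"]) (simp add: add.commute)
  qed
qed

lemma zero_run_moves:
  "zero_run A X p d q \<Longrightarrow> wf_grlowjfa A \<Longrightarrow> ((t, p, zeros d @ s), (t, q, s)) \<in> (grl_move A)\<^sup>*"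
proof (induction rule: zero_run.induct)
  case (zero_run_Cons p X k q d r)
  have "((t, p, zeros k @ (zeros d @ s)), (t, q, zeros d @ s)) \<in> grl_move A"
    using grl_move_delete_prefix zero_run_Cons by blast
  then show ?case using zero_run_Cons by (simp add: replicate_add converse_rtrancl_into_rtrancl)
qed simp

lemma subword_zeros: "k \<le> r \<Longrightarrow> subword (zeros k) (zeros r @ s)"
  unfolding subword_def by (metis append_Nil append_assoc le_add_diff_inverse replicate_add)

lemma zero_rule_after_zeros:
  assumes A: "wf_grlowjfa A" and rule: "(p, zeros k, q) \<in> rules A"
    and no_sub: "no_rule_subword A p (zeros r)" and no_ovl: "\<not> overlaps (zeros r) (zeros k)"
  shows "r = 0"
proof (rule ccontr)
  assume "r \<noteq> 0"
  have "1 \<le> k" using rule_word_ne_Nil[OF A rule] by (cases k) auto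
  show False
  proof (cases "k = 1")
    case True
    have "zeros k \<in> rule_words A p" using rule unfolding rule_words_def by blast
    then show False
      using no_sub subword_zeros[of k r "[]"] True \<open>r \<noteq> 0\<close> unfolding no_rule_subword_def by simp
  next
    case False
    \<comment> \<open>The last zero of the context and the first k - 1 zeros of the rule word spell the rule word.\<close>
    have "overlaps (zeros r) (zeros k)" unfolding overlaps_def
    proof (intro exI conjI)
      show "zeros r = zeros (r - 1) @ [0]" using \<open>r \<noteq> 0\<close> by (cases r) (auto simp: replicate_append_same)
      show "zeros k = zeros (k - 1) @ [0]" using \<open>1 \<le> k\<close> by (cases k) (auto simp: replicate_append_same)
      show "[0::nat] @ zeros (k - 1) = zeros k" using \<open>1 \<le> k\<close> by (cases k) auto
    qed (use False \<open>1 \<le> k\<close> in auto)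
    then show False using no_ovl by blast
  qed
qed

lemma grl_move_from_zeros:
  assumes A: "wf_grlowjfa A" and move: "((t, p, zeros b), c') \<in> grl_move A"
  obtains (delete) k q where "(p, zeros k, q) \<in> rules A" "1 \<le> k" "k \<le> b" "c' = (t, q, zeros (b - k))"
    | (jump) "t \<noteq> []" "no_rule_subword A p (zeros b)" "c' = ([], p, t @ zeros b)"
  using move
proof (cases rule: grl_moveE)
  case (delete t' p' u x v q)
  then have "u @ x @ v = zeros b" by simp
  then have u: "u = zeros (length u)" and x: "x = zeros (length x)" and v: "v = zeros (length v)"
    using append_eq_replicate by metis+
  have "length u = 0"
    using zero_rule_after_zeros[OF A, of p "length x" q "length u"] delete u x by simp
  moreover have "1 \<le> length x" using rule_word_ne_Nil[OF A] delete by (cases x) auto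
  moreover have "length u + length x + length v = b"
    using arg_cong[OF \<open>u @ x @ v = zeros b\<close>, of length] by simp
  ultimately show thesis using delete v x by (intro that(1)[of "length x" q]) auto
next
  case (jump t' p' y)
  then show thesis using that(2) by simp
qed

lemma grl_move_from_marked:
  assumes A: "wf_grlowjfa A" and long: "max_rule_len A \<le> i"
    and move: "(([], p, marked i m), c') \<in> grl_move A"
  obtains (delete) k q where "(p, zeros k, q) \<in> rules A" "1 \<le> k" "k \<le> i"
      "c' = ([], q, marked (i - k) m)"
    | (cross) r s l q where "(p, marked s l, q) \<in> rules A" "r + s = i" "l \<le> m"
      "no_rule_subword A p (zeros r)" "c' = (zeros r, q, zeros (m - l))"
  using move
proof (cases rule: grl_moveE)
  case (delete t p' u x v q)
  then have rule: "(p, x, q) \<in> rules A" and c': "c' = (u, q, v)" by auto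
  have "x \<noteq> []" using rule_word_ne_Nil[OF A rule] .
  from delete(1) have "marked i m = u @ (x @ v)" by simp
  from marked_eq_append[OF this] show thesis
  proof (elim disjE exE conjE)
    fix j assume j: "j \<le> i" "u = zeros j" "x @ v = marked (i - j) m"
    from marked_eq_append[OF j(3)[symmetric]] show thesis
    proof (elim disjE exE conjE)
      fix k assume k: "k \<le> i - j" "x = zeros k" "v = marked (i - j - k) m"
      have "j = 0" using zero_rule_after_zeros[OF A, of p k q j] rule delete j k by simp
      then show thesis
        using that(1)[of k q] rule c' j k \<open>x \<noteq> []\<close> by (simp add: Suc_le_eq)
    next
      fix l assume "l \<le> m" "x = marked (i - j) l" "v = zeros (m - l)"
      then show thesis using that(2)[of "i - j" l q j] rule c' delete j by simp
    qed
  next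
    fix l assume l: "u = marked i l" "x @ v = zeros (m - l)"
    then have "x = zeros (length x)" using append_eq_replicate by metis
    moreover have "length x \<le> i" using rule_length_le[OF A rule] long by simp
    ultimately have "subword x u"
      using subword_zeros[of "length x" i] l(1) by (metis marked_def)
    moreover have "x \<in> rule_words A p" using rule unfolding rule_words_def by blast
    ultimately show thesis using delete unfolding no_rule_subword_def by blast
  qed
next
  case (jump t p' y)
  then show thesis by simp
qed

lemma no_rule_subword_zeros_le:
  "no_rule_subword A p (zeros b) \<Longrightarrow> b' \<le> b \<Longrightarrow> no_rule_subword A p (zeros b')"
  unfolding no_rule_subword_def subword_def
  by (metis append_assoc le_add_diff_inverse replicate_add)

lemma no_rule_subword_zeros_ge:
  assumes A: "wf_grlowjfa A" and no_sub: "no_rule_subword A p (zeros r)"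
    and long: "max_rule_len A \<le> r"
  shows "no_rule_subword A p (zeros r')"
  unfolding no_rule_subword_def
proof (intro ballI notI)
  fix w assume w: "w \<in> rule_words A p" and "subword w (zeros r')"
  then have "w = zeros (length w)"
    unfolding subword_def by (metis append_eq_replicate)
  moreover obtain q where "(p, w, q) \<in> rules A" using w unfolding rule_words_def by blast
  then have "length w \<le> r" using rule_length_le[OF A] long by fastforce
  ultimately have "subword w (zeros r)" using subword_zeros[of "length w" r "[]"] by simp
  then show False using no_sub w unfolding no_rule_subword_def by blast
qed

lemma not_overlaps_zeros_marked: "\<not> overlaps (zeros r) (marked s l)"
proof
  assume "overlaps (zeros r) (marked s l)"
  then obtain u1 u2 x1 x2 where ov: "u2 \<noteq> []" "x1 \<noteq> []" "zeros r = u1 @ u2"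
      "marked s l = x1 @ x2" "u2 @ x1 = marked s l"
    unfolding overlaps_def by blast
  \<comment> \<open>Both occurrences of the marked word would put its unique 1 at different positions.\<close>
  define j where "j = length u2"
  have "u2 = zeros j" using append_eq_replicate[OF ov(3)[symmetric]] j_def by simp
  then have e: "marked s l = zeros j @ x1" using ov(5) by simp
  have "0 < j" using ov(1) j_def by simp
  have one: "marked s l ! s = 1" by (simp add: marked_def nth_append)
  show False
  proof (cases "s < j")
    case True
    then show False using one e by (simp add: nth_append)
  next
    case False
    have "s - j < length x1" using arg_cong[OF e, of length] False by simp
    have "marked s l ! s = x1 ! (s - j)" using e False by (simp add: nth_append)
    also have "\<dots> = (x1 @ x2) ! (s - j)" using \<open>s - j < length x1\<close> by (simp add: nth_append)
    also have "\<dots> = marked s l ! (s - j)" using ov(4) by simp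
    also have "\<dots> = 0" using \<open>0 < j\<close> False by (simp add: marked_def nth_append)
    finally show False using one by simp
  qed
qed

lemma grl_move_cross:
  "(p, marked s l, q) \<in> rules A \<Longrightarrow> no_rule_subword A p (zeros r) \<Longrightarrow> l \<le> m \<Longrightarrow>
   (([], p, marked (r + s) m), (zeros r, q, zeros (m - l))) \<in> grl_move A"
proof -
  assume a: "(p, marked s l, q) \<in> rules A" "no_rule_subword A p (zeros r)" "l \<le> m"
  have "marked (r + s) m = zeros r @ marked s l @ zeros (m - l)"
    using a(3) by (simp add: marked_def replicate_add[symmetric])
  then show ?thesis
    using grl_move_deleteI[OF a(1,2) not_overlaps_zeros_marked, of "[]" "zeros (m - l)"] by simp
qed

lemma accepts_zeros_zeros:
  assumes A: "wf_grlowjfa A" and "1 \<le> a"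
  shows "accepts A (zeros a, q, zeros b) \<Longrightarrow>
    \<exists>q' b'. b' \<le> b \<and> zero_run A (states A) q (b - b') q' \<and> no_rule_subword A q' (zeros b') \<and>
      accepts A ([], q', zeros (a + b'))"
proof (induction b arbitrary: q rule: less_induct)
  case (less b)
  obtain c' where move: "((zeros a, q, zeros b), c') \<in> grl_move A" and acc: "accepts A c'"
    using accepts_next[OF less.prems] \<open>1 \<le> a\<close> by auto
  from A move show ?case
  proof (cases rule: grl_move_from_zeros)
    case (delete k q1)
    then obtain q' b' where IH: "b' \<le> b - k" "zero_run A (states A) q1 (b - k - b') q'"
        "no_rule_subword A q' (zeros b')" "accepts A ([], q', zeros (a + b'))"
      using less.IH[of "b - k" q1] acc by auto
    have "zero_run A (states A) q (k + (b - k - b')) q'"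
      using zero_run_Cons[OF rule_source_state[OF A delete(1)] delete(1) IH(2)] .
    moreover have "k + (b - k - b') = b - b'" using IH(1) delete(3) by simp
    ultimately show ?thesis using IH by (intro exI[of _ q'] exI[of _ b']) auto
  next
    case jump
    then show ?thesis
      using acc by (intro exI[of _ q] exI[of _ b]) (auto intro: zero_run_Nil simp: replicate_add)
  qed
qed

lemma accepts_marked_first_phase:
  assumes A: "wf_grlowjfa A"
  shows "accepts A ([], p, marked i m) \<Longrightarrow>
    \<exists>p' i'. i' \<le> i \<and> zero_run A (states A) p (i - i') p' \<and> accepts A ([], p', marked i' m) \<and>
      (i' < 2 * max_rule_len A \<or>
       (\<exists>r s l q. (p', marked s l, q) \<in> rules A \<and> r + s = i' \<and> l \<le> m \<and>
          no_rule_subword A p' (zeros r) \<and> accepts A (zeros r, q, zeros (m - l))))"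
proof (induction i arbitrary: p rule: less_induct)
  case (less i)
  show ?case
  proof (cases "i < 2 * max_rule_len A")
    case True
    then show ?thesis using less.prems by (intro exI[of _ p] exI[of _ i]) (auto intro: zero_run_Nil)
  next
    case False
    obtain c' where move: "(([], p, marked i m), c') \<in> grl_move A" and acc: "accepts A c'"
      using accepts_next[OF less.prems] by (auto simp: marked_def)
    have "max_rule_len A \<le> i" using False by simp
    with A show ?thesis using move
    proof (cases rule: grl_move_from_marked)
      case (delete k q)
      have "i - k < i" "accepts A ([], q, marked (i - k) m)" using delete acc by auto
      from less.IH[OF this] obtain p' i' where IH: "i' \<le> i - k" "zero_run A (states A) q (i - k - i') p'"
          "accepts A ([], p', marked i' m)"
          "i' < 2 * max_rule_len A \<or>
           (\<exists>r s l q. (p', marked s l, q) \<in> rules A \<and> r + s = i' \<and> l \<le> m \<and>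
              no_rule_subword A p' (zeros r) \<and> accepts A (zeros r, q, zeros (m - l)))"
        by blast
      have "zero_run A (states A) p (k + (i - k - i')) p'"
        using zero_run_Cons[OF rule_source_state[OF A delete(1)] delete(1) IH(2)] .
      moreover have "k + (i - k - i') = i - i'" using IH(1) delete(3) by simp
      ultimately show ?thesis using IH by (intro exI[of _ p'] exI[of _ i']) auto
    next
      case (cross r s l q)
      then show ?thesis
        using acc less.prems by (intro exI[of _ p] exI[of _ i]) (auto intro: zero_run_Nil)
    qed
  qed
qed

lemma accepts_marked_zero_run:
  "wf_grlowjfa A \<Longrightarrow> zero_run A X p d p' \<Longrightarrow> accepts A ([], p', marked i m) \<Longrightarrow>
   accepts A ([], p, marked (d + i) m)"
  using zero_run_moves[of A X p d p' "[]" "marked i m"] accepts_moves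
  by (simp add: zeros_append_marked)

lemma accepts_marked_via_cross:
  assumes A: "wf_grlowjfa A" and rule: "(p, marked s l, q) \<in> rules A"
    and no_sub: "no_rule_subword A p (zeros r)" and "r \<noteq> 0" and "l \<le> m" "m - l = d + b"
    and run: "zero_run A X q d q'" and no_sub': "no_rule_subword A q' (zeros b)"
    and acc: "accepts A ([], q', zeros (r + b))"
  shows "accepts A ([], p, marked (r + s) m)"
proof -
  have "(([], p, marked (r + s) m), (zeros r, q, zeros d @ zeros b)) \<in> grl_move A"
    using grl_move_cross[OF rule no_sub \<open>l \<le> m\<close>] \<open>m - l = d + b\<close> by (simp add: replicate_add)
  moreover have "((zeros r, q, zeros d @ zeros b), (zeros r, q', zeros b)) \<in> (grl_move A)\<^sup>*"
    using zero_run_moves[OF run A] .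
  moreover have "((zeros r, q', zeros b), ([], q', zeros (r + b))) \<in> grl_move A"
    using grl_move_jumpI[of "zeros r" A q' "zeros b"] no_sub' \<open>r \<noteq> 0\<close> by (simp add: replicate_add)
  ultimately show ?thesis using acc accepts_move accepts_moves by meson
qed

lemma accepts_after_cross_unbalanced:
  assumes A: "wf_grlowjfa A" and rule: "(p, marked s l, q) \<in> rules A"
    and no_sub: "no_rule_subword A p (zeros r)" and long: "max_rule_len A < r" and "l \<le> m"
    and many: "max_rule_len A * card (states A) < m - l"
    and acc: "accepts A (zeros r, q, zeros (m - l))"
  shows "(\<exists>D > 0. accepts A ([], p, marked (r + s) (m + D))) \<or>
    accepts A ([], p, marked (r + 1 + s) (m - 1))"
proof -
  have "1 \<le> r" "r \<noteq> 0" using long by simp_all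
  from accepts_zeros_zeros[OF A \<open>1 \<le> r\<close> acc] obtain q' b where b: "b \<le> m - l"
    and run: "zero_run A (states A) q (m - l - b) q'"
    and no_sub': "no_rule_subword A q' (zeros b)" and acc': "accepts A ([], q', zeros (r + b))"
    by blast
  show ?thesis
  proof (cases "b = 0")
    case True
    \<comment> \<open>All zeros after the 1 were deleted by zero rules alone: pump that run.\<close>
    have "finite (states A)" using A by (simp add: wf_grlowjfa_def)
    moreover have "zero_run A (states A) q (m - l) q'" using run True by simp
    ultimately obtain D where "0 < D" and run_D: "zero_run A (states A) q (m - l + D) q'"
      using zero_run_pump[OF A _ _ many] by blast
    have "l \<le> m + D" "m + D - l = (m - l + D) + 0" using \<open>l \<le> m\<close> by simp_all
    from accepts_marked_via_cross[OF A rule no_sub \<open>r \<noteq> 0\<close> this run_D]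
    have "accepts A ([], p, marked (r + s) (m + D))" using no_sub' acc' True by simp
    then show ?thesis using \<open>0 < D\<close> by blast
  next
    case False
    \<comment> \<open>Some zeros after the 1 survive until the jump: one of them may as well stand before the 1.\<close>
    have no_sub1: "no_rule_subword A p (zeros (r + 1))"
      using no_rule_subword_zeros_ge[OF A no_sub] long by (meson less_imp_le)
    have no_sub1': "no_rule_subword A q' (zeros (b - 1))"
      using no_rule_subword_zeros_le[OF no_sub'] by simp
    have "l \<le> m - 1" "m - 1 - l = (m - l - b) + (b - 1)" using b False by simp_all
    from accepts_marked_via_cross[OF A rule no_sub1 _ this run no_sub1']
    show ?thesis using acc' False by simp
  qed
qed

lemma accepts_marked_unbalanced:
  assumes A: "wf_grlowjfa A" and acc: "accepts A ([], init A, marked n n)"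
    and n: "max_rule_len A * (card (states A) + 2) < n"
  shows "\<exists>i j. i \<noteq> j \<and> accepts A ([], init A, marked i j)"
proof -
  let ?K = "max_rule_len A" and ?N = "card (states A)"
  obtain p' i' where i': "i' \<le> n" and run: "zero_run A (states A) (init A) (n - i') p'"
    and acc': "accepts A ([], p', marked i' n)"
    and cases: "i' < 2 * ?K \<or>
      (\<exists>r s l q. (p', marked s l, q) \<in> rules A \<and> r + s = i' \<and> l \<le> n \<and>
         no_rule_subword A p' (zeros r) \<and> accepts A (zeros r, q, zeros (n - l)))"
    using accepts_marked_first_phase[OF A acc] by blast
  have prefix: "accepts A ([], init A, marked (n - i' + i) m)"
    if "accepts A ([], p', marked i m)" for i m
    using accepts_marked_zero_run[OF A run that] .
  show ?thesis
  proof (cases "i' < 2 * ?K")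
    case True
    \<comment> \<open>Too many zeros before the 1 were deleted by zero rules alone: pump that run.\<close>
    have "finite (states A)" using A by (simp add: wf_grlowjfa_def)
    moreover have "?K * ?N < n - i'" using True n by (simp add: algebra_simps)
    ultimately obtain D where "0 < D" and run_D: "zero_run A (states A) (init A) (n - i' + D) p'"
      using zero_run_pump[OF A _ run] by blast
    have "accepts A ([], init A, marked (n - i' + D + i') n)"
      by (rule accepts_marked_zero_run[OF A run_D acc'])
    then show ?thesis using \<open>0 < D\<close> i' by (intro exI[of _ "n + D"] exI[of _ n]) simp
  next
    case False
    then obtain r s l q where rule: "(p', marked s l, q) \<in> rules A" and "r + s = i'" "l \<le> n"
      and no_sub: "no_rule_subword A p' (zeros r)" and acc_q: "accepts A (zeros r, q, zeros (n - l))"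
      using cases by blast
    have "s + 1 + l \<le> ?K" using rule_length_le[OF A rule] by simp
    then have "?K < r" "?K * ?N < n - l" using False \<open>r + s = i'\<close> n by (simp_all add: algebra_simps)
    from accepts_after_cross_unbalanced[OF A rule no_sub this(1) \<open>l \<le> n\<close> this(2) acc_q]
    show ?thesis
    proof
      assume "\<exists>D > 0. accepts A ([], p', marked (r + s) (n + D))"
      then obtain D where "0 < D" "accepts A ([], init A, marked (n - i' + (r + s)) (n + D))"
        using prefix by blast
      then have "0 < D" "accepts A ([], init A, marked n (n + D))"
        using \<open>r + s = i'\<close> i' by simp_all
      then show ?thesis by (intro exI[of _ n] exI[of _ "n + D"]) simp
    next
      assume "accepts A ([], p', marked (r + 1 + s) (n - 1))"
      then have "accepts A ([], init A, marked (n + 1) (n - 1))"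
        using prefix[of "r + 1 + s"] \<open>r + s = i'\<close> i' by simp
      then show ?thesis by (intro exI[of _ "n + 1"] exI[of _ "n - 1"]) simp
    qed
  qed
qed

section \<open>A context-free language outside GRLOWJ\<close>

definition marked_grammar :: cfg where
  "marked_grammar = \<lparr>nonterms = {0}, terms = {0, 1},
     prods = {(0, [Inr 0, Inl 0, Inr 0]), (0, [Inr 1])}, start = 0\<rparr>"

lemma wf_marked_grammar: "wf_cfg marked_grammar"
  unfolding wf_cfg_def marked_grammar_def by auto

fun marked_tree :: "nat \<Rightarrow> tree" where
  "marked_tree 0 = Nd 0 [Lf 1]"
| "marked_tree (Suc n) = Nd 0 [Lf 0, marked_tree n, Lf 0]"

lemma marked_tree:
  "valid_tree marked_grammar (marked_tree n) \<and> root (marked_tree n) = Inl 0 \<and>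
   yield (marked_tree n) = marked n n"
  by (induction n) (auto simp: marked_grammar_def marked_def replicate_append_same)

lemma root_eq_Inr: "root t = Inr a \<longleftrightarrow> t = Lf a"
  by (cases t) auto

lemma valid_tree_marked_grammar:
  "valid_tree marked_grammar t \<Longrightarrow> root t = Inl 0 \<Longrightarrow> \<exists>n. yield t = marked n n"
proof (induction t)
  case (Nd A ts)
  have "(A, map root ts) \<in> prods marked_grammar" using Nd.prems by simp
  then have "map root ts = [Inr 0, Inl 0, Inr 0] \<or> map root ts = [Inr 1]"
    by (auto simp: marked_grammar_def)
  then show ?case
  proof
    assume "map root ts = [Inr 0, Inl 0, Inr 0]"
    then obtain t where ts: "ts = [Lf 0, t, Lf 0]" "root t = Inl 0"
      by (auto simp: map_eq_Cons_conv root_eq_Inr)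
    then obtain k where "yield t = marked k k" using Nd.IH Nd.prems by auto
    then have "yield (Nd A ts) = marked (Suc k) (Suc k)"
      using ts by (simp add: marked_def replicate_append_same)
    then show ?thesis by blast
  next
    assume "map root ts = [Inr 1]"
    then have "ts = [Lf 1]" by (auto simp: map_eq_Cons_conv root_eq_Inr)
    then have "yield (Nd A ts) = marked 0 0" by (simp add: marked_def)
    then show ?thesis by blast
  qed
qed simp

lemma cfg_lang_marked_grammar: "cfg_lang marked_grammar = range (\<lambda>n. marked n n)"
proof
  have start: "start marked_grammar = 0" by (simp add: marked_grammar_def)
  show "cfg_lang marked_grammar \<subseteq> range (\<lambda>n. marked n n)"
  proof
    fix w assume "w \<in> cfg_lang marked_grammar"
    then obtain t where "valid_tree marked_grammar t" "root t = Inl 0" "yield t = w"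
      using cfg_lang_valid_tree start by metis
    then show "w \<in> range (\<lambda>n. marked n n)" using valid_tree_marked_grammar by blast
  qed
  show "range (\<lambda>n. marked n n) \<subseteq> cfg_lang marked_grammar"
  proof
    fix w assume "w \<in> range (\<lambda>n. marked n n)"
    then obtain n where "w = yield (marked_tree n)" using marked_tree by auto
    then show "w \<in> cfg_lang marked_grammar"
      using valid_tree_in_cfg_lang[of marked_grammar "marked_tree n"] marked_tree start by simp
  qed
qed

lemma marked_inject: "marked i j = marked i' j' \<longleftrightarrow> i = i' \<and> j = j'"
proof
  assume eq: "marked i j = marked i' j'"
  have "takeWhile (\<lambda>x. x = 0) (marked i j) = zeros i" for i j
    by (induction i) (auto simp: marked_def)
  then have "i = i'" using arg_cong[OF eq, of "\<lambda>w. length (takeWhile (\<lambda>x. x = 0) w)"] by simp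
  then show "i = i' \<and> j = j'" using arg_cong[OF eq, of length] by simp
qed simp

lemma cfg_lang_marked_grammar_not_GRLOWJ: "cfg_lang marked_grammar \<notin> GRLOWJ"
proof
  assume "cfg_lang marked_grammar \<in> GRLOWJ"
  then obtain A where A: "wf_grlowjfa A" and L: "cfg_lang marked_grammar = grl_lang A"
    unfolding GRLOWJ_def by blast
  define n where "n = max_rule_len A * (card (states A) + 2) + 1"
  have "marked n n \<in> grl_lang A" using L cfg_lang_marked_grammar by auto
  then have alph: "{0, 1} \<subseteq> alph A" and acc: "accepts A ([], init A, marked n n)"
    unfolding grl_lang_accepts by (auto simp: marked_def n_def)
  have "max_rule_len A * (card (states A) + 2) < n" by (simp add: n_def)
  from accepts_marked_unbalanced[OF A acc this]
  obtain i j where "i \<noteq> j" "accepts A ([], init A, marked i j)" by blast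
  moreover have "marked i j \<in> lists (alph A)" using alph by (auto simp: marked_def)
  ultimately have "marked i j \<in> cfg_lang marked_grammar"
    unfolding L grl_lang_accepts by blast
  then show False using \<open>i \<noteq> j\<close> cfg_lang_marked_grammar marked_inject by auto
qed

theorem proposition4:
  shows "\<not> (CF \<subseteq> GRLOWJ) \<and> \<not> (GRLOWJ \<subseteq> CF)"
proof
  have "cfg_lang marked_grammar \<in> CF" unfolding CF_def using wf_marked_grammar by blast
  then show "\<not> (CF \<subseteq> GRLOWJ)" using cfg_lang_marked_grammar_not_GRLOWJ by blast
next
  have "grl_lang abc_automaton \<in> GRLOWJ" unfolding GRLOWJ_def using wf_abc_automaton by blast
  then show "\<not> (GRLOWJ \<subseteq> CF)" using grl_lang_abc_automaton_not_CF by blast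
qed

end
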